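(* Let $\mathcal{H}$ be a hypertree, $B$ a basic set of $\mathcal{H}$, and $u,v$ elements of $B$ lying in different connected components of the 2-section of $\overline{\mathcal{H}_B}$. Then $B=\bigcup_{T\in\tau(\mathcal{H})} V(T[u,v])$, where $\tau(\mathcal{H})$ is the set of all host trees of $\mathcal{H}$ and $T[u,v]$ is the path from $u$ to $v$ in $T$.
   Context: A hypergraph $\mathcal{H}$ has a finite vertex set $V(\mathcal{H})$ and a finite family of nonempty subsets (edges). A host tree is a tree on $V(\mathcal{H})$ in which every edge induces a connected subgraph; a hypertree is a hypergraph with a host tree. For $A\subseteq V(\mathcal{H})$, $\overline{\mathcal{H}_A}$ is the hypergraph on $V(\mathcal{H})$ whose edges are the edges of $\mathcal{H}$ not containing $A$. The 2-section of a hypergraph is the graph on its vertices where two distinct vertices are adjacent iff some edge contains both. A union of sets is connected if the intersection graph of the sets is connected. $Comp(\mathcal{H})$ is the hypergraph without repeated edges on $V(\mathcal{H})$ whose edges are $V(\mathcal{H})$, all singletons, and all proper subsets obtainable from edges of $\mathcal{H}$ by repeated nonempty intersections and connected unions; a basic set is an edge of $Comp(\mathcal{H})$ with more than one vertex that is not a connected union of strictly smaller edges of $Comp(\mathcal{H})$. *)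

theory Defs
  imports Main
begin

definition hypergraph :: "'a set \<Rightarrow> 'a set set \<Rightarrow> bool" where
  "hypergraph V E \<longleftrightarrow> finite V \<and> finite E \<and> (\<forall>e\<in>E. e \<noteq> {} \<and> e \<subseteq> V)"

(* Graphs on V: sets of undirected edges {x,y}, x \<noteq> y. *)
definition adj_in :: "'a set set \<Rightarrow> 'a set \<Rightarrow> ('a \<times> 'a) set" where
  "adj_in G S = {(x,y). {x,y} \<in> G \<and> x \<in> S \<and> y \<in> S}"

definition connected_in :: "'a set set \<Rightarrow> 'a set \<Rightarrow> bool" where
  "connected_in G S \<longleftrightarrow> (\<forall>x\<in>S. \<forall>y\<in>S. (x,y) \<in> (adj_in G S)\<^sup>*)"

definition simple_graph :: "'a set \<Rightarrow> 'a set set \<Rightarrow> bool" where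
  "simple_graph V G \<longleftrightarrow> (\<forall>e\<in>G. \<exists>x y. x \<noteq> y \<and> e = {x,y} \<and> x \<in> V \<and> y \<in> V)"

(* acyclic: no edge lies on a cycle, i.e. removing any edge disconnects its endpoints *)
definition acyclic_graph :: "'a set \<Rightarrow> 'a set set \<Rightarrow> bool" where
  "acyclic_graph V G \<longleftrightarrow>
     (\<forall>x y. {x,y} \<in> G \<longrightarrow> (x,y) \<notin> (adj_in (G - {{x,y}}) V)\<^sup>*)"

definition is_tree :: "'a set \<Rightarrow> 'a set set \<Rightarrow> bool" where
  "is_tree V T \<longleftrightarrow> simple_graph V T \<and> connected_in T V \<and> acyclic_graph V T"

definition host_tree :: "'a set \<Rightarrow> 'a set set \<Rightarrow> 'a set set \<Rightarrow> bool" where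
  "host_tree V E T \<longleftrightarrow> is_tree V T \<and> (\<forall>e\<in>E. connected_in T e)"

definition hypertree :: "'a set \<Rightarrow> 'a set set \<Rightarrow> bool" where
  "hypertree V E \<longleftrightarrow> hypergraph V E \<and> (\<exists>T. host_tree V E T)"

definition is_path :: "'a set set \<Rightarrow> 'a list \<Rightarrow> 'a \<Rightarrow> 'a \<Rightarrow> bool" where
  "is_path G p u v \<longleftrightarrow> p \<noteq> [] \<and> hd p = u \<and> last p = v \<and> distinct p \<and>
     (\<forall>i. Suc i < length p \<longrightarrow> {p ! i, p ! Suc i} \<in> G)"

(* vertex set of the (unique, in a tree) path from u to v *)
definition path_verts :: "'a set set \<Rightarrow> 'a \<Rightarrow> 'a \<Rightarrow> 'a set" where
  "path_verts G u v = {w. \<exists>p. is_path G p u v \<and> w \<in> set p}"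

(* edges of H-bar_A: edges not containing A *)
definition edges_not_containing :: "'a set set \<Rightarrow> 'a set \<Rightarrow> 'a set set" where
  "edges_not_containing E A = {e \<in> E. \<not> A \<subseteq> e}"

definition two_section :: "'a set set \<Rightarrow> 'a set set" where
  "two_section E = {{x,y} | x y. x \<noteq> y \<and> (\<exists>e\<in>E. x \<in> e \<and> y \<in> e)}"

definition inter_connected :: "'a set set \<Rightarrow> bool" where
  "inter_connected F \<longleftrightarrow>
     (\<forall>A\<in>F. \<forall>B\<in>F. (A,B) \<in> {(X,Y). X \<in> F \<and> Y \<in> F \<and> X \<inter> Y \<noteq> {}}\<^sup>*)"

inductive_set comp_gen :: "'a set set \<Rightarrow> 'a set set" for E where
  base: "e \<in> E \<Longrightarrow> e \<in> comp_gen E"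
| inter: "A \<in> comp_gen E \<Longrightarrow> B \<in> comp_gen E \<Longrightarrow> A \<inter> B \<noteq> {} \<Longrightarrow> A \<inter> B \<in> comp_gen E"
| union: "F \<in> Pow (comp_gen E) \<Longrightarrow> finite F \<Longrightarrow> F \<noteq> {} \<Longrightarrow> inter_connected F \<Longrightarrow> \<Union>F \<in> comp_gen E"
monos Pow_mono

definition Comp :: "'a set \<Rightarrow> 'a set set \<Rightarrow> 'a set set" where
  "Comp V E = {V} \<union> {{x} | x. x \<in> V} \<union> {S \<in> comp_gen E. S \<subset> V}"

definition basic_set :: "'a set \<Rightarrow> 'a set set \<Rightarrow> 'a set \<Rightarrow> bool" where
  "basic_set V E B \<longleftrightarrow> B \<in> Comp V E \<and> card B > 1 \<and>
     \<not> (\<exists>F. F \<subseteq> {S \<in> Comp V E. S \<subset> B} \<and> F \<noteq> {} \<and> inter_connected F \<and> \<Union>F = B)"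

end

theory Submission
  imports Defs
begin

(* Every set of Comp(H) is connected in every host tree, since in a tree connectivity survives
   nonempty intersections and connected unions; and a connected set of a tree contains the tree
   path between any two of its vertices. This gives the inclusion of the union of the paths in B.
   Conversely, let w be in B and T a host tree. The T-path from u to v lies in B, and as u and v
   lie in different components of the 2-section, it has an edge xy with x in the component of u
   and y outside it; hence every hyperedge containing x and y contains B, and so w. Deleting xy
   splits T into a part containing u and x and a part containing y and v. If w lies in the first
   part, replacing xy by wy yields a tree that is still a host tree and whose path from u to v
   runs through w; otherwise exchange the roles of u and v. *)

section \<open>Reachability and paths\<close>

lemma sym_adj_in: "sym (adj_in G S)"
  unfolding adj_in_def sym_def by (auto simp: insert_commute)

lemma adj_in_rtrancl_sym: "(a, b) \<in> (adj_in G S)\<^sup>* \<Longrightarrow> (b, a) \<in> (adj_in G S)\<^sup>*"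
  by (meson sym_adj_in sym_rtrancl symD)

lemma adj_in_mono: "G \<subseteq> G' \<Longrightarrow> S \<subseteq> S' \<Longrightarrow> adj_in G S \<subseteq> adj_in G' S'"
  unfolding adj_in_def by auto

lemma adj_in_rtrancl_mono:
  "G \<subseteq> G' \<Longrightarrow> S \<subseteq> S' \<Longrightarrow> (a, b) \<in> (adj_in G S)\<^sup>* \<Longrightarrow> (a, b) \<in> (adj_in G' S')\<^sup>*"
  using rtrancl_mono[OF adj_in_mono] by blast

lemma adj_in_insert_rtrancl:
  assumes "(a, b) \<in> (adj_in (insert {c, d} G) S)\<^sup>*"
  shows "(a, b) \<in> (adj_in G S)\<^sup>* \<or>
         (a, c) \<in> (adj_in G S)\<^sup>* \<and> (d, b) \<in> (adj_in G S)\<^sup>* \<or>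
         (a, d) \<in> (adj_in G S)\<^sup>* \<and> (c, b) \<in> (adj_in G S)\<^sup>*"
proof -
  let ?R = "adj_in G S"
  have "adj_in (insert {c, d} G) S \<subseteq> insert (c, d) (insert (d, c) ?R)"
    unfolding adj_in_def by (auto simp: doubleton_eq_iff)
  then have "(a, b) \<in> (insert (c, d) (insert (d, c) ?R))\<^sup>*"
    using assms rtrancl_mono by blast
  then show ?thesis
    unfolding rtrancl_insert using adj_in_rtrancl_sym by (blast intro: rtrancl_trans)
qed

lemma is_path_successively:
  "is_path G p u v \<longleftrightarrow>
     p \<noteq> [] \<and> hd p = u \<and> last p = v \<and> distinct p \<and> successively (\<lambda>a b. {a, b} \<in> G) p"
  unfolding is_path_def successively_conv_nth by simp

lemma is_path_Cons_Cons:
  "is_path G (a # b # p) u v \<longleftrightarrow> u = a \<and> {a, b} \<in> G \<and> a \<notin> set (b # p) \<and> is_path G (b # p) b v"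
  unfolding is_path_successively by auto

lemma is_path_singleton: "is_path G [a] u v \<longleftrightarrow> u = a \<and> v = a"
  unfolding is_path_successively by auto

lemma is_path_mono: "G \<subseteq> G' \<Longrightarrow> is_path G p u v \<Longrightarrow> is_path G' p u v"
  unfolding is_path_def by blast

lemma is_path_rev: "is_path G p u v \<Longrightarrow> is_path G (rev p) v u"
  unfolding is_path_successively by (auto simp: hd_rev last_rev insert_commute)

lemma path_verts_commute: "path_verts G u v = path_verts G v u"
  unfolding path_verts_def by (metis is_path_rev rev_rev_ident set_rev)

lemma is_path_append:
  assumes "is_path G p a b" "is_path G q c d" "{b, c} \<in> G" "set p \<inter> set q = {}"
  shows "is_path G (p @ q) a d"
  using assms unfolding is_path_successively by (auto simp: successively_append_iff)

lemma is_path_prefix: "is_path G (xs @ z # ys) u v \<Longrightarrow> is_path G (xs @ [z]) u z"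
  unfolding is_path_successively
  by (auto simp: successively_append_iff successively_Cons hd_append split: if_splits)

lemma is_path_suffix: "is_path G (xs @ z # ys) u v \<Longrightarrow> is_path G (z # ys) z v"
  unfolding is_path_successively by (auto simp: successively_append_iff)

lemma is_path_avoiding_vertex:
  assumes "is_path G p u v" "y \<notin> set p"
  shows "is_path (G - {{x, y}}) p u v"
proof -
  have "successively (\<lambda>a b. {a, b} \<in> G - {{x, y}}) p"
    using assms unfolding is_path_successively
    by (auto intro: successively_mono simp: doubleton_eq_iff)
  then show ?thesis
    using assms(1) unfolding is_path_successively by simp
qed

lemma is_path_split_at_edge:
  assumes "is_path G (xs @ x # y # ys) u v"
  shows "{x, y} \<in> G" "is_path (G - {{x, y}}) (xs @ [x]) u x" "is_path (G - {{x, y}}) (y # ys) y v"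
proof -
  have "distinct (xs @ x # y # ys)"
    using assms unfolding is_path_def by simp
  then have "y \<notin> set (xs @ [x])" "x \<notin> set (y # ys)"
    by auto
  moreover have "is_path G (x # y # ys) x v"
    using is_path_suffix[OF assms] .
  ultimately show "{x, y} \<in> G" "is_path (G - {{x, y}}) (xs @ [x]) u x"
    "is_path (G - {{x, y}}) (y # ys) y v"
    using is_path_prefix[OF assms] is_path_avoiding_vertex[of G _ _ _ x y]
      is_path_avoiding_vertex[of G _ _ _ y x]
    by (auto simp: is_path_Cons_Cons insert_commute)
qed

lemma is_path_imp_reachable:
  "is_path G p a b \<Longrightarrow> set p \<subseteq> S \<Longrightarrow> (a, b) \<in> (adj_in G S)\<^sup>*"
proof (induction p arbitrary: a)
  case Nil
  then show ?case by (simp add: is_path_def)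
next
  case (Cons c p)
  show ?case
  proof (cases p)
    case Nil
    then show ?thesis using Cons.prems by (simp add: is_path_singleton)
  next
    case (Cons d q)
    then have "a = c" "(c, d) \<in> adj_in G S" "(d, b) \<in> (adj_in G S)\<^sup>*"
      using Cons.prems Cons.IH[of d] by (auto simp: is_path_Cons_Cons adj_in_def)
    then show ?thesis by (simp add: converse_rtrancl_into_rtrancl)
  qed
qed

lemma is_path_imp_reachable_vertex:
  assumes "is_path G p a b" "set p \<subseteq> S" "z \<in> set p"
  shows "(a, z) \<in> (adj_in G S)\<^sup>*"
proof -
  obtain xs ys where p: "p = xs @ z # ys"
    using assms(3) by (meson split_list)
  then have "is_path G (xs @ [z]) a z"
    using assms(1) by (simp add: is_path_prefix)
  moreover have "set (xs @ [z]) \<subseteq> S"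
    using assms(2) p by auto
  ultimately show ?thesis
    by (rule is_path_imp_reachable)
qed

lemma reachable_imp_is_path:
  assumes "(a, b) \<in> (adj_in G S)\<^sup>*" "a \<in> S"
  shows "\<exists>p. is_path G p a b \<and> set p \<subseteq> S"
  using assms(1)
proof (induction rule: rtrancl_induct)
  case base
  show ?case using assms(2) by (intro exI[of _ "[a]"]) (simp add: is_path_singleton)
next
  case (step b c)
  then obtain p where p: "is_path G p a b" "set p \<subseteq> S" by blast
  have bc: "{b, c} \<in> G" "c \<in> S"
    using step.hyps(2) unfolding adj_in_def by auto
  show ?case
  proof (cases "c \<in> set p")
    case True
    then obtain xs ys where "p = xs @ c # ys" by (meson split_list)
    then show ?thesis using p is_path_prefix by fastforce
  next
    case False
    then have "is_path G (p @ [c]) a c"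
      using p(1) bc is_path_append[of G p a b "[c]" c c] by (simp add: is_path_singleton)
    then show ?thesis using p bc by (intro exI[of _ "p @ [c]"]) simp
  qed
qed

lemma list_split_at_change:
  assumes "P (hd p)" "z \<in> set p" "\<not> P z"
  shows "\<exists>xs x y ys. p = xs @ x # y # ys \<and> P x \<and> \<not> P y"
  using assms
proof (induction p)
  case Nil
  then show ?case by simp
next
  case (Cons a p)
  then have "p \<noteq> []" "z \<in> set p" by auto
  then obtain b q where p: "p = b # q" by (cases p) auto
  show ?case
  proof (cases "P b")
    case True
    then obtain xs x y ys where "p = xs @ x # y # ys" "P x" "\<not> P y"
      using Cons.IH \<open>z \<in> set p\<close> Cons.prems(3) p by auto
    then show ?thesis by (metis append_Cons)
  next
    case False
    then show ?thesis using Cons.prems(1) p by (metis append_Nil list.sel(1))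
  qed
qed

section \<open>Trees and their connected sets\<close>

lemma simple_graph_edge_vertices: "simple_graph V G \<Longrightarrow> {a, b} \<in> G \<Longrightarrow> a \<in> V \<and> b \<in> V"
  unfolding simple_graph_def by (metis doubleton_eq_iff)

lemma simple_graph_subset: "simple_graph V G \<Longrightarrow> H \<subseteq> G \<Longrightarrow> simple_graph V H"
  unfolding simple_graph_def by (meson subsetD)

lemma simple_graph_insert:
  "simple_graph V G \<Longrightarrow> a \<noteq> b \<Longrightarrow> a \<in> V \<Longrightarrow> b \<in> V \<Longrightarrow> simple_graph V (insert {a, b} G)"
  unfolding simple_graph_def by (metis insert_iff)

lemma acyclic_graph_subset: "acyclic_graph V G \<Longrightarrow> H \<subseteq> G \<Longrightarrow> acyclic_graph V H"
  unfolding acyclic_graph_def by (meson Diff_mono adj_in_rtrancl_mono order_refl subsetD)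

lemma adj_in_insert_bridge_rtrancl:
  assumes bridge: "(w, y) \<notin> (adj_in G V)\<^sup>*" and "H \<subseteq> G"
    and ab: "(a, b) \<in> (adj_in G V)\<^sup>*" and reach: "(a, b) \<in> (adj_in (insert {w, y} H) V)\<^sup>*"
  shows "(a, b) \<in> (adj_in H V)\<^sup>*"
proof -
  let ?R = "adj_in G V"
  have H_R: "(c, d) \<in> (adj_in H V)\<^sup>* \<Longrightarrow> (c, d) \<in> ?R\<^sup>*" for c d
    using adj_in_rtrancl_mono[OF \<open>H \<subseteq> G\<close> order_refl] .
  have "(w, y) \<in> ?R\<^sup>*" if "(c, w) \<in> ?R\<^sup>*" "(c, d) \<in> ?R\<^sup>*" "(d, y) \<in> ?R\<^sup>*" for c d
    using that adj_in_rtrancl_sym by (meson rtrancl_trans)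
  then have not_across: "\<not> ((c, w) \<in> ?R\<^sup>* \<and> (d, y) \<in> ?R\<^sup>*)" if "(c, d) \<in> ?R\<^sup>*" for c d
    using that bridge by blast
  from reach consider "(a, b) \<in> (adj_in H V)\<^sup>*"
    | "(a, w) \<in> (adj_in H V)\<^sup>*" "(y, b) \<in> (adj_in H V)\<^sup>*"
    | "(a, y) \<in> (adj_in H V)\<^sup>*" "(w, b) \<in> (adj_in H V)\<^sup>*"
    using adj_in_insert_rtrancl[of a b w y H V] by blast
  then show ?thesis
  proof cases
    case 2
    then show ?thesis
      using not_across[OF ab] H_R[OF 2(1)] adj_in_rtrancl_sym[OF H_R[OF 2(2)]] by blast
  next
    case 3
    then show ?thesis
      using not_across[OF adj_in_rtrancl_sym[OF ab]] H_R[OF 3(1)] adj_in_rtrancl_sym[OF H_R[OF 3(2)]]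
      by blast
  qed
qed

lemma acyclic_graph_insert:
  assumes acyclic: "acyclic_graph V G" and sg: "simple_graph V G"
    and bridge: "(w, y) \<notin> (adj_in G V)\<^sup>*"
  shows "acyclic_graph V (insert {w, y} G)"
  unfolding acyclic_graph_def
proof (intro allI impI notI)
  fix a b
  assume ab: "{a, b} \<in> insert {w, y} G"
    and reach: "(a, b) \<in> (adj_in (insert {w, y} G - {{a, b}}) V)\<^sup>*"
  show False
  proof (cases "{a, b} = {w, y}")
    case True
    have "insert {w, y} G - {{a, b}} \<subseteq> G"
      by (simp add: True)
    then have "(a, b) \<in> (adj_in G V)\<^sup>*"
      using reach by (rule adj_in_rtrancl_mono[OF _ order_refl])
    then have "(w, y) \<in> (adj_in G V)\<^sup>*"
      using True adj_in_rtrancl_sym by (auto simp: doubleton_eq_iff)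
    then show False
      using bridge by contradiction
  next
    case False
    then have "{a, b} \<in> G"
      using ab by simp
    moreover have "a \<in> V" "b \<in> V"
      using simple_graph_edge_vertices[OF sg \<open>{a, b} \<in> G\<close>] by auto
    ultimately have "(a, b) \<in> adj_in G V"
      unfolding adj_in_def by simp
    moreover have "(a, b) \<in> (adj_in (insert {w, y} (G - {{a, b}})) V)\<^sup>*"
      using reach False by (simp add: insert_Diff_if)
    ultimately have "(a, b) \<in> (adj_in (G - {{a, b}}) V)\<^sup>*"
      using adj_in_insert_bridge_rtrancl[OF bridge Diff_subset r_into_rtrancl] by blast
    then show False
      using acyclic \<open>{a, b} \<in> G\<close> unfolding acyclic_graph_def by blast
  qed
qed

lemma is_path_vertices:
  "simple_graph V G \<Longrightarrow> is_path G p a b \<Longrightarrow> a \<in> V \<Longrightarrow> set p \<subseteq> V"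
proof (induction p arbitrary: a)
  case Nil
  then show ?case by simp
next
  case (Cons c p)
  then show ?case
    by (cases p) (auto simp: is_path_singleton is_path_Cons_Cons dest: simple_graph_edge_vertices)
qed

lemma tree_path_subset_connected:
  assumes T: "is_tree V T" and "S \<subseteq> V" "connected_in T S" and p: "is_path T p a b"
    and "a \<in> S" "b \<in> S"
  shows "set p \<subseteq> S"
proof (rule ccontr)
  assume "\<not> set p \<subseteq> S"
  then obtain z where "z \<in> set p" "z \<notin> S" by blast
  moreover have "hd p \<in> S"
    using p \<open>a \<in> S\<close> unfolding is_path_def by simp
  ultimately obtain xs c d ys where split: "p = xs @ c # d # ys" "c \<in> S" "d \<notin> S"
    using list_split_at_change[of "\<lambda>x. x \<in> S" p z] by blast
  let ?H = "T - {{c, d}}"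
  have sg: "simple_graph V T" and acyclic: "acyclic_graph V T"
    using T unfolding is_tree_def by auto
  have cd: "{c, d} \<in> T" and path_db: "is_path ?H (d # ys) d b"
    using is_path_split_at_edge p split(1) by auto
  have "set (d # ys) \<subseteq> V"
    using is_path_vertices[OF sg is_path_mono[OF _ path_db]] simple_graph_edge_vertices[OF sg cd]
    by blast
  with path_db have "(d, b) \<in> (adj_in ?H V)\<^sup>*"
    by (rule is_path_imp_reachable)
  moreover have "(b, c) \<in> (adj_in T S)\<^sup>*"
    using assms(3) \<open>b \<in> S\<close> split(2) unfolding connected_in_def by blast
  then have "(b, c) \<in> (adj_in ?H V)\<^sup>*"
    using \<open>S \<subseteq> V\<close> \<open>d \<notin> S\<close> rtrancl_mono[of "adj_in T S" "adj_in ?H V"]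
    unfolding adj_in_def by (auto simp: doubleton_eq_iff)
  ultimately have "(c, d) \<in> (adj_in ?H V)\<^sup>*"
    by (meson adj_in_rtrancl_sym rtrancl_trans)
  then show False
    using acyclic cd unfolding acyclic_graph_def by blast
qed

lemma tree_remove_edge_reachable:
  assumes "is_tree V T" "{x, y} \<in> T" "a \<in> V"
  shows "(a, x) \<in> (adj_in (T - {{x, y}}) V)\<^sup>* \<or> (a, y) \<in> (adj_in (T - {{x, y}}) V)\<^sup>*"
proof -
  have "simple_graph V T" "connected_in T V"
    using assms(1) unfolding is_tree_def by auto
  then have "x \<in> V"
    using assms(2) simple_graph_edge_vertices by metis
  then have "(a, x) \<in> (adj_in (insert {x, y} (T - {{x, y}})) V)\<^sup>*"
    using assms(2,3) \<open>connected_in T V\<close> unfolding connected_in_def by (simp add: insert_absorb)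
  then show ?thesis
    using adj_in_insert_rtrancl[of a x x y "T - {{x, y}}" V] by blast
qed

lemma tree_connected_in_Int:
  assumes "is_tree V T" "connected_in T A" "connected_in T C" "C \<subseteq> V"
  shows "connected_in T (A \<inter> C)"
  unfolding connected_in_def
proof (intro ballI)
  fix a b assume ab: "a \<in> A \<inter> C" "b \<in> A \<inter> C"
  then have "(a, b) \<in> (adj_in T A)\<^sup>*"
    using assms(2) unfolding connected_in_def by simp
  then obtain p where p: "is_path T p a b" "set p \<subseteq> A"
    using reachable_imp_is_path ab(1) by (meson IntD1)
  moreover have "set p \<subseteq> C"
    using tree_path_subset_connected[OF assms(1,4,3) p(1)] ab by simp
  ultimately show "(a, b) \<in> (adj_in T (A \<inter> C))\<^sup>*"
    by (simp add: is_path_imp_reachable)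
qed

lemma connected_in_Union:
  assumes "\<forall>X\<in>F. connected_in G X" "inter_connected F"
  shows "connected_in G (\<Union>F)"
  unfolding connected_in_def
proof (intro ballI)
  fix a b assume "a \<in> \<Union>F" "b \<in> \<Union>F"
  then obtain X Y where X: "X \<in> F" "a \<in> X" and Y: "Y \<in> F" "b \<in> Y" by blast
  have reach_within: "(c, d) \<in> (adj_in G (\<Union>F))\<^sup>*" if "Z \<in> F" "c \<in> Z" "d \<in> Z" for Z c d
    using assms(1) that adj_in_rtrancl_mono[of G G Z "\<Union>F" c d]
    unfolding connected_in_def by blast
  have "(X, Y) \<in> {(X, Y). X \<in> F \<and> Y \<in> F \<and> X \<inter> Y \<noteq> {}}\<^sup>*"
    using assms(2) X(1) Y(1) unfolding inter_connected_def by blast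
  then have "\<forall>d\<in>Y. (a, d) \<in> (adj_in G (\<Union>F))\<^sup>*"
  proof (induction rule: rtrancl_induct)
    case base
    then show ?case using X reach_within by blast
  next
    case (step Y Z)
    then obtain c where "c \<in> Y" "c \<in> Z" "Z \<in> F" by blast
    then show ?case
      using step.IH reach_within by (blast intro: rtrancl_trans)
  qed
  then show "(a, b) \<in> (adj_in G (\<Union>F))\<^sup>*" using Y(2) by blast
qed

lemma comp_gen_connected_in_host_tree:
  assumes "S \<in> comp_gen E" "hypergraph V E" "host_tree V E T"
  shows "S \<subseteq> V \<and> connected_in T S"
  using assms(1)
proof (induction rule: comp_gen.induct)
  case (base e)
  then show ?case using assms(2,3) unfolding hypergraph_def host_tree_def by blast
next
  case (inter A C)
  have "is_tree V T"
    using assms(3) unfolding host_tree_def by simp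
  then show ?case
    using inter.IH tree_connected_in_Int by blast
next
  case (union F)
  then have "\<forall>X\<in>F. X \<subseteq> V \<and> connected_in T X"
    by blast
  then show ?case
    using connected_in_Union union.hyps(3) by blast
qed

lemma Comp_connected_in_host_tree:
  assumes "S \<in> Comp V E" "hypergraph V E" "host_tree V E T"
  shows "S \<subseteq> V \<and> connected_in T S"
proof -
  from assms(1) consider "S = V" | x where "S = {x}" "x \<in> V" | "S \<in> comp_gen E"
    unfolding Comp_def by blast
  then show ?thesis
  proof cases
    case 1
    then show ?thesis using assms(3) unfolding host_tree_def is_tree_def by simp
  next
    case 2
    then show ?thesis unfolding connected_in_def by simp
  next
    case 3
    then show ?thesis using comp_gen_connected_in_host_tree assms(2,3) by blast
  qed
qed

section \<open>Exchanging a tree edge\<close>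

lemma tree_exchange:
  assumes T: "is_tree V T" and xy: "{x, y} \<in> T" and "w \<in> V"
    and wx: "(w, x) \<in> (adj_in (T - {{x, y}}) V)\<^sup>*"
  shows "is_tree V (insert {w, y} (T - {{x, y}}))"
proof -
  let ?H = "T - {{x, y}}"
  let ?T' = "insert {w, y} ?H"
  have sg: "simple_graph V T" and acyclic: "acyclic_graph V T"
    using T unfolding is_tree_def by auto
  have "y \<in> V"
    using simple_graph_edge_vertices[OF sg xy] by simp
  have "(x, y) \<notin> (adj_in ?H V)\<^sup>*"
    using acyclic xy unfolding acyclic_graph_def by blast
  then have wy: "(w, y) \<notin> (adj_in ?H V)\<^sup>*"
    using wx adj_in_rtrancl_sym rtrancl_trans by metis
  then have "w \<noteq> y" by auto
  then have "simple_graph V ?T'"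
    using simple_graph_subset[OF sg] \<open>w \<in> V\<close> \<open>y \<in> V\<close> by (simp add: simple_graph_insert)
  moreover have "acyclic_graph V ?T'"
  proof (rule acyclic_graph_insert)
    show "acyclic_graph V ?H"
      using acyclic by (rule acyclic_graph_subset) blast
    show "simple_graph V ?H"
      using sg by (rule simple_graph_subset) blast
  qed (rule wy)
  moreover have "connected_in ?T' V"
  proof -
    have from_H: "(a, b) \<in> (adj_in ?H V)\<^sup>* \<Longrightarrow> (a, b) \<in> (adj_in ?T' V)\<^sup>*" for a b
      using adj_in_rtrancl_mono[of ?H ?T' V V] by blast
    have "(y, w) \<in> adj_in ?T' V"
      using \<open>w \<in> V\<close> \<open>y \<in> V\<close> unfolding adj_in_def by (simp add: insert_commute)
    then have "(y, x) \<in> (adj_in ?T' V)\<^sup>*"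
      using from_H[OF wx] by (rule converse_rtrancl_into_rtrancl)
    then have "(a, x) \<in> (adj_in ?T' V)\<^sup>*" if "a \<in> V" for a
      using tree_remove_edge_reachable[OF T xy that] from_H by (meson rtrancl_trans)
    then show ?thesis
      unfolding connected_in_def by (meson adj_in_rtrancl_sym rtrancl_trans)
  qed
  ultimately show ?thesis
    unfolding is_tree_def by blast
qed

lemma connected_in_exchange:
  assumes "connected_in T e" "e \<subseteq> V" and xy: "{x, y} \<in> T"
    and wx: "(w, x) \<in> (adj_in (T - {{x, y}}) V)\<^sup>*" and wy: "(w, y) \<notin> (adj_in (T - {{x, y}}) V)\<^sup>*"
    and through_w: "x \<in> e \<Longrightarrow> y \<in> e \<Longrightarrow> w \<in> e"
  shows "connected_in (insert {w, y} (T - {{x, y}})) e"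
proof -
  let ?H = "T - {{x, y}}"
  let ?T' = "insert {w, y} ?H"
  have xy_joined: "(x, y) \<in> (adj_in ?T' e)\<^sup>*" if "x \<in> e" "y \<in> e"
  proof -
    have "w \<in> e"
      using through_w that .
    \<comment> \<open>Inside e, w is joined to x without the edge xy, since joining it to y would join x to y.\<close>
    have "(w, x) \<in> (adj_in (insert {x, y} ?H) e)\<^sup>*"
      using \<open>connected_in T e\<close> that \<open>w \<in> e\<close> xy unfolding connected_in_def
      by (simp add: insert_absorb)
    moreover have "(w, y) \<notin> (adj_in ?H e)\<^sup>*"
      using wy adj_in_rtrancl_mono[of ?H ?H e V w y] \<open>e \<subseteq> V\<close> by blast
    ultimately have "(w, x) \<in> (adj_in ?H e)\<^sup>*"
      using adj_in_insert_rtrancl[of w x x y ?H e] by blast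
    then have "(w, x) \<in> (adj_in ?T' e)\<^sup>*"
      by (rule adj_in_rtrancl_mono[OF subset_insertI order_refl])
    then have "(x, w) \<in> (adj_in ?T' e)\<^sup>*"
      by (rule adj_in_rtrancl_sym)
    moreover have "(w, y) \<in> adj_in ?T' e"
      using that \<open>w \<in> e\<close> unfolding adj_in_def by simp
    ultimately show ?thesis
      by (rule rtrancl_into_rtrancl)
  qed
  have "(p, q) \<in> (adj_in ?T' e)\<^sup>*" if "(p, q) \<in> adj_in T e" for p q
  proof (cases "{p, q} = {x, y}")
    case True
    then have "p = x \<and> q = y \<or> p = y \<and> q = x"
      by (simp add: doubleton_eq_iff)
    moreover have "p \<in> e" "q \<in> e"
      using that unfolding adj_in_def by auto
    ultimately show ?thesis
      using xy_joined adj_in_rtrancl_sym[OF xy_joined] by auto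
  next
    case False
    have "{p, q} \<in> T" "p \<in> e" "q \<in> e"
      using that unfolding adj_in_def by auto
    then have "(p, q) \<in> adj_in ?T' e"
      using False unfolding adj_in_def by blast
    then show ?thesis
      by (rule r_into_rtrancl)
  qed
  then have "(adj_in T e)\<^sup>* \<subseteq> (adj_in ?T' e)\<^sup>*"
    by (intro rtrancl_subset_rtrancl) auto
  then show ?thesis
    using \<open>connected_in T e\<close> unfolding connected_in_def by blast
qed

lemma host_tree_exchange:
  assumes E: "hypergraph V E" and T: "host_tree V E T" and xy: "{x, y} \<in> T" and "w \<in> V"
    and wx: "(w, x) \<in> (adj_in (T - {{x, y}}) V)\<^sup>*"
    and edges_through_w: "\<forall>e\<in>E. x \<in> e \<and> y \<in> e \<longrightarrow> w \<in> e"
  shows "host_tree V E (insert {w, y} (T - {{x, y}}))"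
proof -
  have tree: "is_tree V T"
    using T unfolding host_tree_def by simp
  have "(x, y) \<notin> (adj_in (T - {{x, y}}) V)\<^sup>*"
    using tree xy unfolding is_tree_def acyclic_graph_def by blast
  then have wy: "(w, y) \<notin> (adj_in (T - {{x, y}}) V)\<^sup>*"
    using wx adj_in_rtrancl_sym rtrancl_trans by metis
  have "connected_in (insert {w, y} (T - {{x, y}})) e" if "e \<in> E" for e
  proof (rule connected_in_exchange[OF _ _ xy wx wy])
    show "connected_in T e" "e \<subseteq> V"
      using E T \<open>e \<in> E\<close> unfolding hypergraph_def host_tree_def by auto
    show "x \<in> e \<Longrightarrow> y \<in> e \<Longrightarrow> w \<in> e"
      using edges_through_w \<open>e \<in> E\<close> by blast
  qed
  then show ?thesis
    using tree_exchange[OF tree xy \<open>w \<in> V\<close> wx] unfolding host_tree_def by blast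
qed

lemma path_through_new_edge:
  assumes separated: "(x, y) \<notin> (adj_in H V)\<^sup>*"
    and ux: "(u, x) \<in> (adj_in H V)\<^sup>*" and wx: "(w, x) \<in> (adj_in H V)\<^sup>*"
    and yv: "(y, v) \<in> (adj_in H V)\<^sup>*" and "u \<in> V" "y \<in> V"
  shows "w \<in> path_verts (insert {w, y} H) u v"
proof -
  let ?R = "adj_in H V"
  have "(u, w) \<in> ?R\<^sup>*"
    using ux adj_in_rtrancl_sym[OF wx] by (rule rtrancl_trans)
  then obtain p where p: "is_path H p u w" "set p \<subseteq> V"
    using reachable_imp_is_path \<open>u \<in> V\<close> by metis
  obtain q where q: "is_path H q y v" "set q \<subseteq> V"
    using reachable_imp_is_path yv \<open>y \<in> V\<close> by metis
  have "set p \<inter> set q = {}"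
  proof (rule ccontr)
    assume "set p \<inter> set q \<noteq> {}"
    then obtain z where "z \<in> set p" "z \<in> set q"
      by blast
    then have "(u, z) \<in> ?R\<^sup>*" "(y, z) \<in> ?R\<^sup>*"
      using is_path_imp_reachable_vertex[OF p] is_path_imp_reachable_vertex[OF q] by simp_all
    then have "(x, z) \<in> ?R\<^sup>*" "(z, y) \<in> ?R\<^sup>*"
      using adj_in_rtrancl_sym[OF ux] by (auto intro: rtrancl_trans adj_in_rtrancl_sym)
    then have "(x, y) \<in> ?R\<^sup>*"
      by (rule rtrancl_trans)
    then show False
      using separated by contradiction
  qed
  moreover have "is_path (insert {w, y} H) p u w"
    by (rule is_path_mono[OF subset_insertI p(1)])
  moreover have "is_path (insert {w, y} H) q y v"
    by (rule is_path_mono[OF subset_insertI q(1)])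
  ultimately have "is_path (insert {w, y} H) (p @ q) u v"
    using is_path_append[of "insert {w, y} H" p u w q y v] by simp
  moreover have "w \<in> set (p @ q)"
    using p(1) unfolding is_path_def by auto
  ultimately show ?thesis
    unfolding path_verts_def by blast
qed

lemma host_tree_path_through_exchange:
  assumes E: "hypergraph V E" and T: "host_tree V E T" and xy: "{x, y} \<in> T"
    and ux: "(u, x) \<in> (adj_in (T - {{x, y}}) V)\<^sup>*"
    and yv: "(y, v) \<in> (adj_in (T - {{x, y}}) V)\<^sup>*"
    and wx: "(w, x) \<in> (adj_in (T - {{x, y}}) V)\<^sup>*"
    and "u \<in> V" "w \<in> V" and edges_through_w: "\<forall>e\<in>E. x \<in> e \<and> y \<in> e \<longrightarrow> w \<in> e"
  shows "\<exists>T'. host_tree V E T' \<and> w \<in> path_verts T' u v"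
proof -
  have tree: "is_tree V T"
    using T unfolding host_tree_def by simp
  then have "y \<in> V"
    using xy simple_graph_edge_vertices unfolding is_tree_def by metis
  moreover have "(x, y) \<notin> (adj_in (T - {{x, y}}) V)\<^sup>*"
    using tree xy unfolding is_tree_def acyclic_graph_def by blast
  ultimately have "w \<in> path_verts (insert {w, y} (T - {{x, y}})) u v"
    using path_through_new_edge[OF _ ux wx yv \<open>u \<in> V\<close>] by blast
  moreover have "host_tree V E (insert {w, y} (T - {{x, y}}))"
    using host_tree_exchange[OF E T xy \<open>w \<in> V\<close> wx edges_through_w] .
  ultimately show ?thesis
    by blast
qed

lemma host_tree_path_through_vertex:
  assumes E: "hypergraph V E" and T: "host_tree V E T" and xy: "{x, y} \<in> T"
    and ux: "(u, x) \<in> (adj_in (T - {{x, y}}) V)\<^sup>*"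
    and yv: "(y, v) \<in> (adj_in (T - {{x, y}}) V)\<^sup>*"
    and "u \<in> V" "v \<in> V" "w \<in> V" and edges_through_w: "\<forall>e\<in>E. x \<in> e \<and> y \<in> e \<longrightarrow> w \<in> e"
  shows "\<exists>T'. host_tree V E T' \<and> w \<in> path_verts T' u v"
proof -
  have "is_tree V T"
    using T unfolding host_tree_def by simp
  then consider "(w, x) \<in> (adj_in (T - {{x, y}}) V)\<^sup>*" | "(w, y) \<in> (adj_in (T - {{x, y}}) V)\<^sup>*"
    using tree_remove_edge_reachable[OF _ xy \<open>w \<in> V\<close>] by blast
  then show ?thesis
  proof cases
    case 1
    show ?thesis
      by (rule host_tree_path_through_exchange[OF E T xy ux yv 1 \<open>u \<in> V\<close> \<open>w \<in> V\<close> edges_through_w])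
  next
    case 2
    have yx: "{y, x} \<in> T" and H: "T - {{y, x}} = T - {{x, y}}"
      using xy by (simp_all add: insert_commute)
    have vy: "(v, y) \<in> (adj_in (T - {{y, x}}) V)\<^sup>*"
      and xu: "(x, u) \<in> (adj_in (T - {{y, x}}) V)\<^sup>*"
      and wy: "(w, y) \<in> (adj_in (T - {{y, x}}) V)\<^sup>*"
      using adj_in_rtrancl_sym[OF yv] adj_in_rtrancl_sym[OF ux] 2 unfolding H by simp_all
    have "\<forall>e\<in>E. y \<in> e \<and> x \<in> e \<longrightarrow> w \<in> e"
      using edges_through_w by blast
    then have "\<exists>T'. host_tree V E T' \<and> w \<in> path_verts T' v u"
      by (rule host_tree_path_through_exchange[OF E T yx vy xu wy \<open>v \<in> V\<close> \<open>w \<in> V\<close>])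
    then show ?thesis
      by (simp add: path_verts_commute)
  qed
qed

lemma adj_in_two_section:
  "e \<in> F \<Longrightarrow> x \<in> e \<Longrightarrow> y \<in> e \<Longrightarrow> x \<noteq> y \<Longrightarrow> x \<in> V \<Longrightarrow> y \<in> V \<Longrightarrow> (x, y) \<in> adj_in (two_section F) V"
  unfolding adj_in_def two_section_def by blast

lemma host_tree_path_through_separated:
  assumes E: "hypergraph V E" and T: "host_tree V E T" and "B \<subseteq> V" "connected_in T B"
    and "u \<in> B" "v \<in> B" "w \<in> B"
    and separated: "(u, v) \<notin> (adj_in (two_section (edges_not_containing E B)) V)\<^sup>*"
  shows "\<exists>T'. host_tree V E T' \<and> w \<in> path_verts T' u v"
proof -
  let ?R = "adj_in (two_section (edges_not_containing E B)) V"
  have "(u, v) \<in> (adj_in T B)\<^sup>*"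
    using \<open>connected_in T B\<close> \<open>u \<in> B\<close> \<open>v \<in> B\<close> unfolding connected_in_def by simp
  then obtain p where p: "is_path T p u v" "set p \<subseteq> B"
    using reachable_imp_is_path \<open>u \<in> B\<close> by metis
  then have "hd p = u" "v \<in> set p"
    unfolding is_path_def by auto
  then obtain xs x y ys where split: "p = xs @ x # y # ys" "(u, x) \<in> ?R\<^sup>*" "(u, y) \<notin> ?R\<^sup>*"
    using list_split_at_change[of "\<lambda>z. (u, z) \<in> ?R\<^sup>*" p v] separated by auto
  have path_split: "is_path T (xs @ x # y # ys) u v"
    using p(1) unfolding split(1) .
  note xy = is_path_split_at_edge(1)[OF path_split]
    and path_ux = is_path_split_at_edge(2)[OF path_split]
    and path_yv = is_path_split_at_edge(3)[OF path_split]
  have "set p \<subseteq> V"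
    using p(2) \<open>B \<subseteq> V\<close> by blast
  then have ux: "(u, x) \<in> (adj_in (T - {{x, y}}) V)\<^sup>*"
    and yv: "(y, v) \<in> (adj_in (T - {{x, y}}) V)\<^sup>*"
    using is_path_imp_reachable[OF path_ux] is_path_imp_reachable[OF path_yv] unfolding split(1) by auto
  have "x \<noteq> y" "x \<in> V" "y \<in> V"
    using p \<open>set p \<subseteq> V\<close> unfolding split(1) is_path_def by auto
  have "B \<subseteq> e" if "e \<in> E" "x \<in> e" "y \<in> e" for e
  proof (rule ccontr)
    assume "\<not> B \<subseteq> e"
    then have "(x, y) \<in> ?R"
      using adj_in_two_section[of e "edges_not_containing E B"] that \<open>x \<noteq> y\<close> \<open>x \<in> V\<close> \<open>y \<in> V\<close>
      unfolding edges_not_containing_def by blast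
    then show False
      using split(2,3) by (meson rtrancl_into_rtrancl)
  qed
  then have "\<forall>e\<in>E. x \<in> e \<and> y \<in> e \<longrightarrow> w \<in> e"
    using \<open>w \<in> B\<close> by blast
  moreover have "u \<in> V" "v \<in> V" "w \<in> V"
    using assms(3,5-7) by auto
  ultimately show ?thesis
    using host_tree_path_through_vertex[OF E T xy ux yv] by simp
qed

theorem mainTheorem17:
  fixes V :: "'a set" and E :: "'a set set" and B :: "'a set" and u v :: 'a
  assumes "hypertree V E"
    and "basic_set V E B"
    and "u \<in> B" and "v \<in> B"
    and "(u, v) \<notin> (adj_in (two_section (edges_not_containing E B)) V)\<^sup>*"
  shows "B = \<Union> {path_verts T u v | T. host_tree V E T}"
proof -
  obtain T0 where E: "hypergraph V E" and T0: "host_tree V E T0"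
    using assms(1) unfolding hypertree_def by blast
  have "B \<in> Comp V E"
    using assms(2) unfolding basic_set_def by simp
  then have B_connected: "B \<subseteq> V \<and> connected_in T B" if "host_tree V E T" for T
    using Comp_connected_in_host_tree[OF _ E that] by blast
  show ?thesis
  proof (intro equalityI subsetI)
    fix w assume "w \<in> B"
    then obtain T where "host_tree V E T" "w \<in> path_verts T u v"
      using host_tree_path_through_separated[OF E T0 _ _ assms(3,4) _ assms(5)] B_connected[OF T0]
      by blast
    then show "w \<in> \<Union> {path_verts T u v | T. host_tree V E T}"
      by blast
  next
    fix w assume "w \<in> \<Union> {path_verts T u v | T. host_tree V E T}"
    then obtain T p where T: "host_tree V E T" and p: "is_path T p u v" "w \<in> set p"
      unfolding path_verts_def by blast
    have "is_tree V T"
      using T unfolding host_tree_def by simp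
    then have "set p \<subseteq> B"
      using tree_path_subset_connected[OF _ _ _ p(1) assms(3,4)] B_connected[OF T] by blast
    then show "w \<in> B"
      using p(2) by blast
  qed
qed

end
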